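(* Let $G^\dagger=(V^\dagger,E^\dagger)$ be a graph whose vertex set is partitioned into "blossom" vertices and "non-blossom" vertices, and let $w^\dagger\in\mathbb{R}^{|E^\dagger|}$. Consider the LP: minimize $w^\dagger\cdot x$ subject to $\sum_{e\in\delta(v)}x_e=1$ for every non-blossom vertex $v\in V^\dagger$, $\sum_{e\in\delta(v)}x_e\ge 1$ for every blossom vertex $v\in V^\dagger$, and $x\in[0,1]^{|E^\dagger|}$. If this LP is feasible, then it has an optimal solution $x^*\in\{0,\tfrac12,1\}^{|E^\dagger|}$ such that the set of edges $e$ with $x^*_e=\tfrac12$ forms a collection of vertex-disjoint odd cycles.
   Context: $\delta(v)$ denotes the set of edges of $G^\dagger$ incident to $v$. *)

theory Defs
  imports Complex_Main
begin

definition simple_graph :: "'a set \<Rightarrow> 'a set set \<Rightarrow> bool" where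
  "simple_graph V E \<longleftrightarrow> finite V \<and>
     (\<forall>e\<in>E. \<exists>u v. e = {u, v} \<and> u \<noteq> v \<and> u \<in> V \<and> v \<in> V)"

definition delta :: "'a set set \<Rightarrow> 'a \<Rightarrow> 'a set set" where
  "delta E v = {e \<in> E. v \<in> e}"

definition lp_feasible :: "'a set \<Rightarrow> 'a set set \<Rightarrow> 'a set \<Rightarrow> ('a set \<Rightarrow> real) \<Rightarrow> bool" where
  "lp_feasible V E B x \<longleftrightarrow>
     (\<forall>e\<in>E. 0 \<le> x e \<and> x e \<le> 1) \<and>
     (\<forall>v\<in>V - B. (\<Sum>e\<in>delta E v. x e) = 1) \<and>
     (\<forall>v\<in>B. (\<Sum>e\<in>delta E v. x e) \<ge> 1)"

definition lp_cost :: "'a set set \<Rightarrow> ('a set \<Rightarrow> real) \<Rightarrow> ('a set \<Rightarrow> real) \<Rightarrow> real" where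
  "lp_cost E w x = (\<Sum>e\<in>E. w e * x e)"

definition lp_optimal :: "'a set \<Rightarrow> 'a set set \<Rightarrow> 'a set \<Rightarrow> ('a set \<Rightarrow> real) \<Rightarrow> ('a set \<Rightarrow> real) \<Rightarrow> bool" where
  "lp_optimal V E B w x \<longleftrightarrow> lp_feasible V E B x \<and>
     (\<forall>y. lp_feasible V E B y \<longrightarrow> lp_cost E w x \<le> lp_cost E w y)"

text \<open>A cycle given by its cyclic list of distinct vertices (length at least 3).\<close>
definition cycle_edges :: "'a list \<Rightarrow> 'a set set" where
  "cycle_edges vs = {{vs ! i, vs ! ((i + 1) mod length vs)} | i. i < length vs}"

definition is_odd_cycle :: "'a list \<Rightarrow> bool" where
  "is_odd_cycle vs \<longleftrightarrow> distinct vs \<and> length vs \<ge> 3 \<and> odd (length vs)"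

definition vertex_disjoint_odd_cycles :: "'a set set \<Rightarrow> bool" where
  "vertex_disjoint_odd_cycles H \<longleftrightarrow>
     (\<exists>Cs :: 'a list set. (\<forall>c\<in>Cs. is_odd_cycle c) \<and>
        (\<forall>c\<in>Cs. \<forall>d\<in>Cs. c \<noteq> d \<longrightarrow> set c \<inter> set d = {}) \<and>
        H = \<Union> (cycle_edges ` Cs))"

end

theory Submission
  imports Defs
begin

text \<open>Move a feasible point x along a balanced direction d, i.e. one supported on the
  fractional edges and summing to zero at every tight vertex, with the sign that does not raise
  the cost, until an edge becomes integral or a slack blossom becomes tight. This decreases the
  number of fractional edges plus slack blossoms, so every feasible point is dominated by a rigid
  one, admitting no nonzero balanced direction.

  At a rigid point, linear algebra bounds the number of fractional edges by the number of tight
  vertices they touch; double counting then forces each touched vertex to be tight with exactly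
  two fractional edges. Hence x - 1/2 on the fractional edges is balanced, so those edges carry
  1/2 and form a 2-regular graph, i.e. disjoint cycles, and an even cycle would carry the balanced
  direction alternating between 1 and -1. Half-integral points take only finitely many costs, so
  one of them is optimal among them, hence optimal overall.\<close>

section \<open>Cycles given by lists of vertices\<close>

definition cycle_edge :: "'a list \<Rightarrow> nat \<Rightarrow> 'a set" where
  "cycle_edge c i = {c ! i, c ! ((i + 1) mod length c)}"

lemma cycle_edges_eq_image: "cycle_edges c = cycle_edge c ` {..<length c}"
  by (auto simp: cycle_edges_def cycle_edge_def)

lemma vertex_of_cycle_edge:
  assumes "e \<in> cycle_edges c" "v \<in> e"
  shows "v \<in> set c"
proof -
  obtain i where "i < length c" "e = cycle_edge c i"
    using assms(1) by (auto simp: cycle_edges_eq_image)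
  moreover have "0 < length c" using \<open>i < length c\<close> by linarith
  then have "(i + 1) mod length c < length c" by simp
  ultimately show ?thesis
    using assms(2) by (auto simp: cycle_edge_def)
qed

lemma cycle_edge_inj_on:
  assumes "distinct c" "3 \<le> length c"
  shows "inj_on (cycle_edge c) {..<length c}"
proof
  fix i j assume i: "i \<in> {..<length c}" and j: "j \<in> {..<length c}"
    and eq: "cycle_edge c i = cycle_edge c j"
  let ?n = "length c"
  have "0 < ?n" using i by auto
  then have "(i + 1) mod ?n < ?n" "(j + 1) mod ?n < ?n" by auto
  moreover have "(c ! i = c ! j \<and> c ! ((i + 1) mod ?n) = c ! ((j + 1) mod ?n)) \<or>
      (c ! i = c ! ((j + 1) mod ?n) \<and> c ! ((i + 1) mod ?n) = c ! j)"
    using eq by (auto simp: cycle_edge_def doubleton_eq_iff)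
  ultimately have "i = j \<or> (i = (j + 1) mod ?n \<and> (i + 1) mod ?n = j)"
    using assms(1) i j by (auto simp: nth_eq_iff_index_eq)
  then show "i = j"
    using assms(2) i j by (auto simp: mod_Suc split: if_splits)
qed

lemma mod_add_minus_one:
  fixes k n :: nat
  assumes "k < n"
  shows "(k + n - 1) mod n = (if k = 0 then n - 1 else k - 1)"
proof (cases "k = 0")
  case False
  then have "(k + n - 1) mod n = ((k - 1) + n) mod n" by (simp add: Suc_diff_Suc)
  also have "\<dots> = k - 1" using assms by simp
  finally show ?thesis using False by simp
qed (use assms in simp)

lemma cycle_edges_at:
  assumes "distinct c" "3 \<le> length c" "k < length c"
  defines "k' \<equiv> (k + length c - 1) mod length c"
  shows "{e \<in> cycle_edges c. c ! k \<in> e} = {cycle_edge c k, cycle_edge c k'}"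
    and "cycle_edge c k \<noteq> cycle_edge c k'"
proof -
  let ?n = "length c"
  have k'_eq: "k' = (if k = 0 then ?n - 1 else k - 1)"
    using mod_add_minus_one[OF assms(3)] by (simp add: k'_def)
  then have k': "k' < ?n" "(k' + 1) mod ?n = k" "k' \<noteq> k"
    using assms(2,3) by auto
  have mem: "c ! k \<in> cycle_edge c i \<longleftrightarrow> i = k \<or> (i + 1) mod ?n = k" if "i < ?n" for i
  proof -
    have "(i + 1) mod ?n < ?n" using that by (intro mod_less_divisor) linarith
    then show ?thesis
      using assms(1,3) that by (auto simp: cycle_edge_def nth_eq_iff_index_eq)
  qed
  have pred: "i = k'" if "i < ?n" "(i + 1) mod ?n = k" for i
    using that k'_eq by (cases "i + 1 = ?n") auto
  have "c ! k \<in> cycle_edge c k" "c ! k \<in> cycle_edge c k'"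
    using mem[of k] mem[of k'] k' assms(3) by simp_all
  moreover have "cycle_edge c k \<in> cycle_edges c" "cycle_edge c k' \<in> cycle_edges c"
    using k' assms(3) by (simp_all add: cycle_edges_eq_image)
  moreover have "e \<in> {cycle_edge c k, cycle_edge c k'}"
    if e: "e \<in> cycle_edges c" "c ! k \<in> e" for e
  proof -
    obtain i where "i < ?n" "e = cycle_edge c i"
      using e(1) by (auto simp: cycle_edges_eq_image)
    then show ?thesis using e(2) mem pred by blast
  qed
  ultimately show "{e \<in> cycle_edges c. c ! k \<in> e} = {cycle_edge c k, cycle_edge c k'}"
    by blast
  show "cycle_edge c k \<noteq> cycle_edge c k'"
    using inj_onD[OF cycle_edge_inj_on[OF assms(1,2)]] k' assms(3) by blast
qed

definition alternating :: "'a list \<Rightarrow> 'a set \<Rightarrow> real" where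
  "alternating c e =
     (if e \<in> cycle_edges c then (-1) ^ the_inv_into {..<length c} (cycle_edge c) e else 0)"

lemma alternating_cycle_edge:
  assumes "distinct c" "3 \<le> length c" "i < length c"
  shows "alternating c (cycle_edge c i) = (-1) ^ i"
  using assms by (auto simp: alternating_def cycle_edges_eq_image
      the_inv_into_f_f[OF cycle_edge_inj_on])

lemma alternating_sum_at_vertex:
  assumes "distinct c" "3 \<le> length c" "even (length c)"
  shows "(\<Sum>e \<in> {e \<in> cycle_edges c. v \<in> e}. alternating c e) = 0"
proof (cases "v \<in> set c")
  case False
  then have "{e \<in> cycle_edges c. v \<in> e} = {}"
    by (auto dest: vertex_of_cycle_edge)
  then show ?thesis by (simp only: sum.empty)
next
  case True
  let ?n = "length c"
  obtain k where k: "k < ?n" "v = c ! k" using True by (auto simp: in_set_conv_nth)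
  define k' where "k' = (k + ?n - 1) mod ?n"
  have "0 < ?n" using k(1) by linarith
  then have "k' < ?n" by (simp add: k'_def)
  have "even k' \<longleftrightarrow> even (k + ?n - 1)"
    using assms(3) by (simp add: k'_def dvd_mod_iff)
  also have "\<dots> \<longleftrightarrow> odd k"
    using assms(3) k by auto
  finally have "(-1) ^ k + (-1) ^ k' = (0::real)"
    by (cases "even k") auto
  then show ?thesis
    using cycle_edges_at[OF assms(1,2) k(1)] k \<open>k' < ?n\<close>
    by (simp add: k'_def alternating_cycle_edge[OF assms(1,2)])
qed

section \<open>Two-regular graphs are disjoint unions of cycles\<close>

definition two_regular :: "'a set set \<Rightarrow> bool" where
  "two_regular F \<longleftrightarrow> finite F \<and> (\<forall>e\<in>F. card e = 2) \<and>
     (\<forall>e\<in>F. \<forall>v\<in>e. card {f \<in> F. v \<in> f} = 2)"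

lemma two_regular_no_three_neighbours:
  assumes "two_regular F" "{v, a} \<in> F" "{v, b} \<in> F" "{v, c} \<in> F" "distinct [v, a, b, c]"
  shows False
proof -
  have "card {{v, a}, {v, b}, {v, c}} = 3"
    using assms(5) by (auto simp: doubleton_eq_iff card_insert_if)
  moreover have "card {{v, a}, {v, b}, {v, c}} \<le> card {f \<in> F. v \<in> f}"
    using assms(1-4) by (intro card_mono) (auto simp: two_regular_def)
  moreover have "card {f \<in> F. v \<in> f} = 2"
    using assms(1,2) by (auto simp: two_regular_def)
  ultimately show False by simp
qed

lemma two_regular_cycle_closed:
  assumes "two_regular F" "distinct c" "3 \<le> length c" "cycle_edges c \<subseteq> F"
    and "f \<in> F" "v \<in> f" "v \<in> set c"
  shows "f \<in> cycle_edges c"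
proof -
  obtain k where k: "k < length c" "v = c ! k" using assms(7) by (auto simp: in_set_conv_nth)
  have "card {e \<in> cycle_edges c. v \<in> e} = 2"
    using cycle_edges_at[OF assms(2,3) k(1)] k(2) by simp
  moreover have "card {f \<in> F. v \<in> f} = 2"
    using assms(1,5,6) by (auto simp: two_regular_def)
  moreover have "{e \<in> cycle_edges c. v \<in> e} \<subseteq> {f \<in> F. v \<in> f}"
    using assms(4) by auto
  moreover have "finite {f \<in> F. v \<in> f}"
    using assms(1) by (simp add: two_regular_def)
  ultimately have "{e \<in> cycle_edges c. v \<in> e} = {f \<in> F. v \<in> f}"
    by (metis card_subset_eq)
  then show ?thesis using assms(5,6) by blast
qed

definition is_path :: "'a set set \<Rightarrow> 'a list \<Rightarrow> bool" where
  "is_path F p \<longleftrightarrow> distinct p \<and> (\<forall>i. Suc i < length p \<longrightarrow> {p ! i, p ! Suc i} \<in> F)"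

lemma closed_path_cycle_edges:
  assumes "is_path F p" "p \<noteq> []" "{last p, hd p} \<in> F"
  shows "cycle_edges p \<subseteq> F"
proof
  fix e assume "e \<in> cycle_edges p"
  then obtain i where i: "i < length p" "e = cycle_edge p i"
    by (auto simp: cycle_edges_eq_image)
  show "e \<in> F"
  proof (cases "Suc i < length p")
    case True
    then show ?thesis using assms(1) i by (simp add: is_path_def cycle_edge_def)
  next
    case False
    then have "i = length p - 1" using i(1) by simp
    then show ?thesis
      using assms(2,3) i by (simp add: cycle_edge_def last_conv_nth hd_conv_nth)
  qed
qed

lemma exists_maximal_path:
  assumes "finite F" "\<forall>e\<in>F. card e = 2" "{u, v} \<in> F" "u \<noteq> v"
  obtains p where "is_path F p" "2 \<le> length p" "\<forall>z. {last p, z} \<in> F \<longrightarrow> z \<in> set p"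
proof -
  define P where "P p \<longleftrightarrow> is_path F p \<and> 2 \<le> length p \<and> set p \<subseteq> \<Union>F" for p
  have fin: "finite (\<Union>F)"
    using assms(1,2) by (intro finite_Union) (auto intro: card_ge_0_finite)
  have "P [u, v]"
    using assms(3,4) by (auto simp: P_def is_path_def less_Suc_eq)
  moreover have "length p < card (\<Union>F) + 1" if "P p" for p
  proof -
    have "length p = card (set p)"
      using that by (simp add: P_def is_path_def distinct_card)
    also have "\<dots> \<le> card (\<Union>F)"
      using that fin by (intro card_mono) (auto simp: P_def)
    finally show ?thesis by simp
  qed
  ultimately obtain p where p: "P p" and longest: "\<And>q. P q \<Longrightarrow> length q \<le> length p"
    using ex_has_greatest_nat[of P "[u, v]" length "card (\<Union>F) + 1"] by blast
  have "z \<in> set p" if z: "{last p, z} \<in> F" for z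
  proof (rule ccontr)
    assume "z \<notin> set p"
    have "P (p @ [z])"
      unfolding P_def is_path_def
    proof (intro conjI allI impI)
      show "distinct (p @ [z])" using p \<open>z \<notin> set p\<close> by (simp add: P_def is_path_def)
      show "2 \<le> length (p @ [z])" using p by (simp add: P_def)
      show "set (p @ [z]) \<subseteq> \<Union>F" using p z by (auto simp: P_def)
      fix i assume i: "Suc i < length (p @ [z])"
      show "{(p @ [z]) ! i, (p @ [z]) ! Suc i} \<in> F"
      proof (cases "Suc i < length p")
        case True
        then show ?thesis using p by (simp add: P_def is_path_def nth_append)
      next
        case False
        then have "i = length p - 1" "p \<noteq> []" using i p by (auto simp: P_def)
        then show ?thesis using z by (simp add: nth_append last_conv_nth)
      qed
    qed
    then show False using longest by fastforce
  qed
  then show ?thesis using that p by (auto simp: P_def)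
qed

lemma two_regular_two_neighbours:
  assumes "two_regular F" "e \<in> F" "z \<in> e"
  obtains u1 u2 where "u1 \<noteq> u2" "u1 \<noteq> z" "u2 \<noteq> z" "{z, u1} \<in> F" "{z, u2} \<in> F"
proof -
  have "card {f \<in> F. z \<in> f} = 2" using assms unfolding two_regular_def by blast
  then obtain f1 f2 where f: "f1 \<noteq> f2" "{f \<in> F. z \<in> f} = {f1, f2}"
    by (meson card_2_iff)
  have other_end: "\<exists>u. f = {z, u} \<and> u \<noteq> z" if "f \<in> {f1, f2}" for f
  proof -
    have "f \<in> F" "z \<in> f" using that f(2) by blast+
    then have "card f = 2" using assms(1) by (simp add: two_regular_def)
    then obtain a b where ab: "f = {a, b}" "a \<noteq> b" by (meson card_2_iff)
    show ?thesis
    proof (cases "z = a")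
      case True then show ?thesis using ab by blast
    next
      case False then show ?thesis using ab \<open>z \<in> f\<close> by blast
    qed
  qed
  obtain u1 where u1: "f1 = {z, u1}" "u1 \<noteq> z" using other_end[of f1] by blast
  obtain u2 where u2: "f2 = {z, u2}" "u2 \<noteq> z" using other_end[of f2] by blast
  have "f1 \<in> F" "f2 \<in> F" using f(2) by blast+
  then show ?thesis using that u1 u2 f(1) by blast
qed

lemma two_regular_maximal_path_closes:
  assumes reg: "two_regular F" and path: "is_path F p" "2 \<le> length p"
    and maximal: "\<forall>z. {last p, z} \<in> F \<longrightarrow> z \<in> set p"
  shows "3 \<le> length p" "{last p, hd p} \<in> F"
proof -
  define k where "k = length p - 1"
  have "p \<noteq> []" using path(2) by auto
  then have k: "k < length p" "Suc k = length p" "last p = p ! k" "hd p = p ! 0"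
    by (auto simp: k_def last_conv_nth hd_conv_nth)
  have dist: "distinct p" and adj: "\<And>i. Suc i < length p \<Longrightarrow> {p ! i, p ! Suc i} \<in> F"
    using path(1) by (auto simp: is_path_def)
  have "{p ! (k - 1), p ! k} \<in> F" using adj[of "k - 1"] k path(2) by simp
  moreover have "p ! k \<in> {p ! (k - 1), p ! k}" by simp
  ultimately obtain u1 u2 where u: "u1 \<noteq> u2" "u1 \<noteq> p ! k" "u2 \<noteq> p ! k"
      and edges: "{p ! k, u1} \<in> F" "{p ! k, u2} \<in> F"
    by (rule two_regular_two_neighbours[OF reg])
  \<comment> \<open>Both neighbours of the last vertex lie on the path, so one of them is not its predecessor.\<close>
  have on_path: "z \<in> set p" if "{p ! k, z} \<in> F" for z
    using maximal that k(3) by metis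
  obtain j1 where j1: "j1 < length p" "p ! j1 = u1"
    using on_path[OF edges(1)] by (meson in_set_conv_nth)
  obtain j2 where j2: "j2 < length p" "p ! j2 = u2"
    using on_path[OF edges(2)] by (meson in_set_conv_nth)
  have "j1 \<noteq> k" "j2 \<noteq> k" "j1 \<noteq> j2" using j1 j2 u by blast+
  then have "j1 + 1 < k \<or> j2 + 1 < k" using j1(1) j2(1) k(2) by linarith
  then obtain j where j: "j + 1 < k" "{p ! k, p ! j} \<in> F"
    using j1 j2 edges by blast
  \<comment> \<open>An inner vertex of the path already has two path edges, so j is the first vertex.\<close>
  have "j = 0"
  proof (rule ccontr)
    assume "j \<noteq> 0"
    have "{p ! (j - 1), p ! Suc (j - 1)} \<in> F" using adj[of "j - 1"] j k by simp
    then have e1: "{p ! j, p ! (j - 1)} \<in> F" using \<open>j \<noteq> 0\<close> by (simp add: insert_commute)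
    have e2: "{p ! j, p ! Suc j} \<in> F" using adj[of j] j k by simp
    have e3: "{p ! j, p ! k} \<in> F" using j by (simp add: insert_commute)
    have "distinct [p ! j, p ! (j - 1), p ! Suc j, p ! k]"
      using dist \<open>j \<noteq> 0\<close> j k(1) by (simp add: nth_eq_iff_index_eq) arith
    then show False by (rule two_regular_no_three_neighbours[OF reg e1 e2 e3])
  qed
  then show "3 \<le> length p" "{last p, hd p} \<in> F" using j k by (simp_all add: insert_commute)
qed

lemma two_regular_contains_cycle:
  assumes "two_regular F" "F \<noteq> {}"
  obtains c where "distinct c" "3 \<le> length c" "cycle_edges c \<subseteq> F"
proof -
  have fin: "finite F" and pairs: "\<forall>e\<in>F. card e = 2"
    using assms(1) by (simp_all add: two_regular_def)
  obtain e where "e \<in> F" using assms(2) by blast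
  then obtain u v where "{u, v} \<in> F" "u \<noteq> v"
    using pairs card_2_iff by metis
  then obtain p where p: "is_path F p" "2 \<le> length p" "\<forall>z. {last p, z} \<in> F \<longrightarrow> z \<in> set p"
    using exists_maximal_path[OF fin pairs] by blast
  note closes = two_regular_maximal_path_closes[OF assms(1) p]
  have "p \<noteq> []" using closes(1) by auto
  then have "cycle_edges p \<subseteq> F" using closed_path_cycle_edges[OF p(1) _ closes(2)] by blast
  moreover have "distinct p" using p(1) by (simp add: is_path_def)
  ultimately show ?thesis using that closes(1) by blast
qed

lemma two_regular_remove_cycle:
  assumes "two_regular F" "distinct c" "3 \<le> length c" "cycle_edges c \<subseteq> F"
  shows "two_regular (F - cycle_edges c)"
    and "\<And>e v. e \<in> F - cycle_edges c \<Longrightarrow> v \<in> e \<Longrightarrow> v \<notin> set c"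
proof -
  let ?F' = "F - cycle_edges c"
  show avoid: "v \<notin> set c" if "e \<in> ?F'" "v \<in> e" for e v
    using two_regular_cycle_closed[OF assms] that by auto
  have same_degree: "{f \<in> ?F'. v \<in> f} = {f \<in> F. v \<in> f}" if "v \<notin> set c" for v
    using that vertex_of_cycle_edge by fastforce
  show "two_regular ?F'"
    unfolding two_regular_def
  proof (intro conjI ballI)
    show "finite ?F'" using assms(1) by (simp add: two_regular_def)
    show "card e = 2" if "e \<in> ?F'" for e
      using assms(1) that by (simp add: two_regular_def)
    show "card {f \<in> ?F'. v \<in> f} = 2" if "e \<in> ?F'" "v \<in> e" for e v
      using assms(1) that same_degree[OF avoid[OF that]] by (auto simp: two_regular_def)
  qed
qed

lemma two_regular_cycle_decomposition:
  assumes "two_regular F"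
  shows "\<exists>Cs. (\<forall>c\<in>Cs. distinct c \<and> 3 \<le> length c) \<and>
           (\<forall>c\<in>Cs. \<forall>d\<in>Cs. c \<noteq> d \<longrightarrow> set c \<inter> set d = {}) \<and>
           F = \<Union> (cycle_edges ` Cs)"
  using assms
proof (induction "card F" arbitrary: F rule: less_induct)
  case less
  show ?case
  proof (cases "F = {}")
    case True
    then show ?thesis by (intro exI[of _ "{}"]) simp
  next
    case False
    then obtain c where c: "distinct c" "3 \<le> length c" "cycle_edges c \<subseteq> F"
      using two_regular_contains_cycle[OF less.prems] by blast
    note rest = two_regular_remove_cycle[OF less.prems c]
    have "cycle_edge c 0 \<in> cycle_edges c"
      unfolding cycle_edges_eq_image using c(2) by (intro imageI) auto
    then have "F - cycle_edges c \<subset> F" using c(3) by blast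
    then have "card (F - cycle_edges c) < card F"
      using less.prems by (simp add: two_regular_def psubset_card_mono)
    then obtain Cs where Cs: "\<forall>c\<in>Cs. distinct c \<and> 3 \<le> length c"
        "\<forall>c\<in>Cs. \<forall>d\<in>Cs. c \<noteq> d \<longrightarrow> set c \<inter> set d = {}"
        "F - cycle_edges c = \<Union> (cycle_edges ` Cs)"
      using less.hyps[OF _ rest(1)] by blast
    have "x \<notin> set c" if d: "d \<in> Cs" "x \<in> set d" for d x
    proof -
      obtain i where i: "i < length d" "x = d ! i" using d(2) by (auto simp: in_set_conv_nth)
      then have "cycle_edge d i \<in> F - cycle_edges c"
        using Cs(3) d(1) by (auto simp: cycle_edges_eq_image)
      then show ?thesis using rest(2) i by (simp add: cycle_edge_def)
    qed
    then have "\<forall>c'\<in>insert c Cs. \<forall>d\<in>insert c Cs. c' \<noteq> d \<longrightarrow> set c' \<inter> set d = {}"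
      using Cs(2) by blast
    moreover have "F = \<Union> (cycle_edges ` insert c Cs)"
      using Cs(3) c(3) by auto
    ultimately show ?thesis using Cs(1) c(1,2) by (intro exI[of _ "insert c Cs"]) auto
  qed
qed

section \<open>Linear algebra and double counting\<close>

lemma homogeneous_system_nontrivial_solution:
  fixes a :: "'l \<Rightarrow> 'e \<Rightarrow> 'k::field"
  assumes "finite L" "finite F" "card L < card F"
  shows "\<exists>d. (\<forall>e. e \<notin> F \<longrightarrow> d e = 0) \<and> (\<exists>e\<in>F. d e \<noteq> 0) \<and>
             (\<forall>l\<in>L. (\<Sum>e\<in>F. a l e * d e) = 0)"
  using assms
proof (induction L arbitrary: F a rule: finite_induct)
  case empty
  then obtain e0 where "e0 \<in> F" by fastforce
  then show ?case by (intro exI[of _ "\<lambda>e. if e = e0 then 1 else 0"]) auto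
next
  case (insert l L)
  show ?case
  proof (cases "\<forall>e\<in>F. a l e = 0")
    case True
    obtain d where "\<forall>e. e \<notin> F \<longrightarrow> d e = 0" "\<exists>e\<in>F. d e \<noteq> 0"
        "\<forall>m\<in>L. (\<Sum>e\<in>F. a m e * d e) = 0"
      using insert.IH[of F a] insert.prems insert.hyps by auto
    then show ?thesis using True by (intro exI[of _ d]) auto
  next
    case False
    \<comment> \<open>Gaussian elimination: use equation l to eliminate the unknown e0.\<close>
    then obtain e0 where e0: "e0 \<in> F" "a l e0 \<noteq> 0" by auto
    define F' where "F' = F - {e0}"
    define a' where "a' m e = a m e - a m e0 * a l e / a l e0" for m e
    have "finite F'" "card L < card F'"
      using insert.prems insert.hyps e0 by (auto simp: F'_def)
    then obtain d' where d': "\<forall>e. e \<notin> F' \<longrightarrow> d' e = 0" "\<exists>e\<in>F'. d' e \<noteq> 0"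
        "\<forall>m\<in>L. (\<Sum>e\<in>F'. a' m e * d' e) = 0"
      using insert.IH by blast
    define d where "d = d'(e0 := - (\<Sum>e\<in>F'. a l e * d' e) / a l e0)"
    have split: "(\<Sum>e\<in>F. a m e * d e) = a m e0 * d e0 + (\<Sum>e\<in>F'. a m e * d' e)" for m
    proof -
      have "(\<Sum>e\<in>F. a m e * d e) = a m e0 * d e0 + (\<Sum>e\<in>F'. a m e * d e)"
        using e0 insert.prems by (simp add: F'_def sum.remove)
      also have "(\<Sum>e\<in>F'. a m e * d e) = (\<Sum>e\<in>F'. a m e * d' e)"
        by (rule sum.cong) (auto simp: d_def F'_def)
      finally show ?thesis .
    qed
    have "(\<Sum>e\<in>F. a m e * d e) = 0" if "m \<in> insert l L" for m
    proof (cases "m = l")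
      case True
      then show ?thesis using split[of l] e0 by (simp add: d_def F'_def)
    next
      case False
      then have "(\<Sum>e\<in>F'. a' m e * d' e) = 0" using d' that by auto
      then have "(\<Sum>e\<in>F'. a m e * d' e) - a m e0 / a l e0 * (\<Sum>e\<in>F'. a l e * d' e) = 0"
        by (simp add: a'_def algebra_simps sum_subtractf sum_distrib_left)
      then show ?thesis using split[of m] e0 by (simp add: d_def F'_def field_simps)
    qed
    moreover have "\<forall>e. e \<notin> F \<longrightarrow> d e = 0" "\<exists>e\<in>F. d e \<noteq> 0"
      using d' e0 by (auto simp: d_def F'_def)
    ultimately show ?thesis by blast
  qed
qed

lemma sum_card_incident_eq_twice_card:
  assumes "finite W" "\<And>e. e \<in> F \<Longrightarrow> card e = 2 \<and> e \<subseteq> W"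
  shows "(\<Sum>v\<in>W. card {e \<in> F. v \<in> e}) = 2 * card F"
proof -
  have "finite F" using assms by (metis Pow_iff finite_Pow_iff finite_subset subsetI)
  have "(\<Sum>v\<in>W. card {e \<in> F. v \<in> e}) = (\<Sum>v\<in>W. \<Sum>e\<in>F. if v \<in> e then 1 else 0)"
    using \<open>finite F\<close> by (simp add: sum.inter_filter[symmetric])
  also have "\<dots> = (\<Sum>e\<in>F. \<Sum>v\<in>W. if v \<in> e then 1 else 0)"
    by (rule sum.swap)
  also have "\<dots> = (\<Sum>e\<in>F. card e)"
  proof (rule sum.cong)
    fix e assume "e \<in> F"
    then have "{v \<in> W. v \<in> e} = e" using assms(2) by auto
    then show "(\<Sum>v\<in>W. if v \<in> e then 1 else 0) = card e"
      using assms(1) by (simp add: sum.inter_filter[symmetric])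
  qed simp
  also have "\<dots> = 2 * card F" using assms(2) by simp
  finally show ?thesis .
qed

lemma sum_le_twice_card_forces_two:
  fixes f :: "'v \<Rightarrow> nat"
  assumes "finite W" "T \<subseteq> W" "\<And>v. v \<in> W \<Longrightarrow> 1 \<le> f v" "\<And>v. v \<in> T \<Longrightarrow> 2 \<le> f v"
    and "(\<Sum>v\<in>W. f v) \<le> 2 * card T"
  shows "T = W" "\<And>v. v \<in> W \<Longrightarrow> f v = 2"
proof -
  have "2 * card T + card (W - T) = (\<Sum>v\<in>T. 2) + (\<Sum>v\<in>W - T. 1)" by simp
  also have "\<dots> \<le> (\<Sum>v\<in>T. f v) + (\<Sum>v\<in>W - T. f v)"
    using assms(3,4) \<open>T \<subseteq> W\<close> by (intro add_mono sum_mono) auto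
  also have "\<dots> = (\<Sum>v\<in>W. f v)"
    using sum.subset_diff[OF assms(2,1), of f] by simp
  finally have "card (W - T) = 0" using assms(5) by linarith
  then show "T = W" using assms(1,2) by (metis Diff_eq_empty_iff card_0_eq finite_Diff subset_antisym)
  then have "(\<Sum>v\<in>W. f v) \<le> (\<Sum>v\<in>W. 2)" using assms(5) by simp
  moreover have "(\<Sum>v\<in>W. 2) \<le> (\<Sum>v\<in>W. f v)"
    using assms(4) \<open>T = W\<close> by (intro sum_mono) auto
  ultimately have "(\<Sum>v\<in>W. 2) = (\<Sum>v\<in>W. f v)" by linarith
  then show "f v = 2" if "v \<in> W" for v
    using sum_mono_inv[of "\<lambda>_. 2" W f v] assms(1,4) \<open>T = W\<close> that by auto
qed

section \<open>Moving along balanced directions\<close>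

lemma simple_graph_finite_edges: "simple_graph V E \<Longrightarrow> finite E"
  unfolding simple_graph_def by (metis (no_types, lifting) Pow_iff empty_subsetI
      finite_Pow_iff insert_subset rev_finite_subset subsetI)

definition fractional_edges :: "'a set set \<Rightarrow> ('a set \<Rightarrow> real) \<Rightarrow> 'a set set" where
  "fractional_edges E x = {e \<in> E. 0 < x e \<and> x e < 1}"

definition slack_blossoms :: "'a set set \<Rightarrow> 'a set \<Rightarrow> ('a set \<Rightarrow> real) \<Rightarrow> 'a set" where
  "slack_blossoms E B x = {v \<in> B. 1 < (\<Sum>e\<in>delta E v. x e)}"

definition fractionality :: "'a set set \<Rightarrow> 'a set \<Rightarrow> ('a set \<Rightarrow> real) \<Rightarrow> nat" where
  "fractionality E B x = card (fractional_edges E x) + card (slack_blossoms E B x)"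

definition balanced_direction ::
    "'a set \<Rightarrow> 'a set set \<Rightarrow> ('a set \<Rightarrow> real) \<Rightarrow> ('a set \<Rightarrow> real) \<Rightarrow> bool" where
  "balanced_direction V E x d \<longleftrightarrow> (\<forall>e. e \<notin> fractional_edges E x \<longrightarrow> d e = 0) \<and>
     (\<forall>v\<in>V. (\<Sum>e\<in>delta E v. x e) = 1 \<longrightarrow> (\<Sum>e\<in>delta E v. d e) = 0)"

text \<open>A feasible point can be moved a little both ways along a balanced direction, so
  a rigid feasible point is a vertex of the polytope.\<close>
definition rigid :: "'a set \<Rightarrow> 'a set set \<Rightarrow> ('a set \<Rightarrow> real) \<Rightarrow> bool" where
  "rigid V E x \<longleftrightarrow> (\<forall>d. balanced_direction V E x d \<longrightarrow> d = (\<lambda>_. 0))"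

lemma balanced_direction_uminus:
  "balanced_direction V E x d \<Longrightarrow> balanced_direction V E x (\<lambda>e. - d e)"
  by (simp add: balanced_direction_def sum_negf)

lemma lp_cost_step: "lp_cost E w (\<lambda>e. x e + t * d e) = lp_cost E w x + t * (\<Sum>e\<in>E. w e * d e)"
  by (simp add: lp_cost_def algebra_simps sum.distrib sum_distrib_left)

lemma feasible_step:
  assumes "B \<subseteq> V" "lp_feasible V E B x" "balanced_direction V E x d"
    and box: "\<And>e. e \<in> E \<Longrightarrow> 0 \<le> x e + t * d e \<and> x e + t * d e \<le> 1"
    and slack: "\<And>v. v \<in> slack_blossoms E B x \<Longrightarrow> 1 \<le> (\<Sum>e\<in>delta E v. x e + t * d e)"
  defines "x' \<equiv> \<lambda>e. x e + t * d e"
  shows "lp_feasible V E B x'"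
    and "fractional_edges E x' \<subseteq> fractional_edges E x"
    and "slack_blossoms E B x' \<subseteq> slack_blossoms E B x"
proof -
  have sum_x': "(\<Sum>e\<in>delta E v. x' e) = (\<Sum>e\<in>delta E v. x e) + t * (\<Sum>e\<in>delta E v. d e)" for v
    by (simp add: x'_def sum.distrib sum_distrib_left)
  have tight: "(\<Sum>e\<in>delta E v. x' e) = 1" if "v \<in> V" "(\<Sum>e\<in>delta E v. x e) = 1" for v
    using assms(3) that by (simp add: sum_x' balanced_direction_def)
  have blossom: "(\<Sum>e\<in>delta E v. x e) = 1 \<or> v \<in> slack_blossoms E B x" if "v \<in> B" for v
    using assms(2) that by (auto simp: lp_feasible_def slack_blossoms_def)
  have "1 \<le> (\<Sum>e\<in>delta E v. x' e)" if "v \<in> B" for v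
    using blossom[OF that] tight[of v] slack[of v] assms(1) that by (auto simp: x'_def)
  moreover have "(\<Sum>e\<in>delta E v. x' e) = 1" if "v \<in> V - B" for v
    using tight assms(2) that by (simp add: lp_feasible_def)
  ultimately show "lp_feasible V E B x'"
    using box by (simp add: lp_feasible_def x'_def)
  show "fractional_edges E x' \<subseteq> fractional_edges E x"
    using assms(3) by (force simp: fractional_edges_def balanced_direction_def x'_def)
  show "slack_blossoms E B x' \<subseteq> slack_blossoms E B x"
    using assms(1) tight blossom by (fastforce simp: slack_blossoms_def)
qed

lemma ratio_test:
  fixes s r :: "'i \<Rightarrow> real"
  assumes "finite I" "\<And>i. i \<in> I \<Longrightarrow> 0 < s i" "i0 \<in> I" "r i0 < 0"
  shows "\<exists>t>0. (\<forall>i\<in>I. 0 \<le> s i + t * r i) \<and> (\<exists>i\<in>I. s i + t * r i = 0)"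
proof -
  define T where "T = (\<lambda>i. s i / - r i) ` {i \<in> I. r i < 0}"
  have "finite T" "T \<noteq> {}" using assms by (auto simp: T_def)
  then have "Min T \<in> T" and Min_le: "\<And>u. u \<in> T \<Longrightarrow> Min T \<le> u" by simp_all
  then obtain i1 where i1: "i1 \<in> I" "r i1 < 0" "Min T = s i1 / - r i1" by (auto simp: T_def)
  have "0 < Min T" using i1 assms(2)[OF i1(1)] by (simp add: divide_pos_neg)
  moreover have "0 \<le> s i + Min T * r i" if "i \<in> I" for i
  proof (cases "r i < 0")
    case True
    then have "Min T \<le> s i / - r i" using Min_le that by (simp add: T_def)
    moreover have "0 < - r i" using True by simp
    ultimately have "Min T * - r i \<le> s i" by (simp only: pos_le_divide_eq)
    then show ?thesis by simp
  next
    case False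
    then show ?thesis using \<open>0 < Min T\<close> assms(2)[OF that] by simp
  qed
  moreover have "s i1 + Min T * r i1 = 0" using i1 by simp
  ultimately show ?thesis using i1(1) by blast
qed

lemma exists_blocking_step:
  assumes "finite E" "finite B" "lp_feasible V E B x" "balanced_direction V E x d" "d e1 \<noteq> 0"
  obtains t where "0 < t"
    and "\<And>e. e \<in> E \<Longrightarrow> 0 \<le> x e + t * d e \<and> x e + t * d e \<le> 1"
    and "\<And>v. v \<in> slack_blossoms E B x \<Longrightarrow> 1 \<le> (\<Sum>e\<in>delta E v. x e + t * d e)"
    and "(\<exists>e\<in>fractional_edges E x. x e + t * d e \<in> {0, 1}) \<or>
         (\<exists>v\<in>slack_blossoms E B x. (\<Sum>e\<in>delta E v. x e + t * d e) = 1)"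
proof -
  let ?F = "fractional_edges E x" and ?S = "slack_blossoms E B x"
  \<comment> \<open>The constraints not tight at x: the upper (True) and lower (False) bound of every
    fractional edge, and the covering constraint of every slack blossom.\<close>
  define I where "I = Inl ` (?F \<times> (UNIV :: bool set)) \<union> Inr ` ?S"
  define s where "s i = (case i of
      Inl (e, upper) \<Rightarrow> if upper then 1 - x e else x e
    | Inr v \<Rightarrow> (\<Sum>e\<in>delta E v. x e) - 1)" for i
  define r where "r i = (case i of
      Inl (e, upper) \<Rightarrow> if upper then - d e else d e
    | Inr v \<Rightarrow> (\<Sum>e\<in>delta E v. d e))" for i
  have edge_step: "s (Inl (e, upper)) + t * r (Inl (e, upper)) =
      (if upper then 1 - (x e + t * d e) else x e + t * d e)" for e upper t
    by (simp add: s_def r_def)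
  have slack_step: "s (Inr v) + t * r (Inr v) = (\<Sum>e\<in>delta E v. x e + t * d e) - 1" for v t
    by (simp add: s_def r_def sum.distrib sum_distrib_left)
  have d_zero: "d e = 0" if "e \<notin> ?F" for e
    using assms(4) that by (simp add: balanced_direction_def)
  have "finite I" unfolding I_def using assms(1,2)
    by (auto simp: fractional_edges_def slack_blossoms_def intro!: finite_imageI finite_cartesian_product)
  moreover have "0 < s i" if "i \<in> I" for i
    using that by (auto simp: I_def s_def fractional_edges_def slack_blossoms_def)
  moreover have "e1 \<in> ?F" using d_zero assms(5) by blast
  then have "Inl (e1, d e1 > 0) \<in> I" "r (Inl (e1, d e1 > 0)) < 0"
    using assms(5) by (auto simp: I_def r_def)
  ultimately obtain t where t: "0 < t" "\<And>i. i \<in> I \<Longrightarrow> 0 \<le> s i + t * r i"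
      and blocking: "\<exists>i\<in>I. s i + t * r i = 0"
    using ratio_test[of I s] by blast
  have "0 \<le> x e + t * d e \<and> x e + t * d e \<le> 1" if "e \<in> E" for e
  proof (cases "e \<in> ?F")
    case True
    then show ?thesis
      using t(2)[of "Inl (e, True)"] t(2)[of "Inl (e, False)"] by (simp add: I_def edge_step)
  next
    case False
    then show ?thesis using assms(3) that d_zero by (simp add: lp_feasible_def)
  qed
  moreover have "1 \<le> (\<Sum>e\<in>delta E v. x e + t * d e)" if "v \<in> ?S" for v
    using t(2)[of "Inr v"] that by (simp add: I_def slack_step)
  moreover have "(\<exists>e\<in>?F. x e + t * d e \<in> {0, 1}) \<or> (\<exists>v\<in>?S. (\<Sum>e\<in>delta E v. x e + t * d e) = 1)"
    using blocking by (auto simp: I_def edge_step slack_step split: if_splits)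
  ultimately show ?thesis using that t(1) by blast
qed

lemma fractionality_less:
  assumes "finite E" "finite B"
    and "fractional_edges E y \<subseteq> fractional_edges E x" "slack_blossoms E B y \<subseteq> slack_blossoms E B x"
    and "fractional_edges E y \<noteq> fractional_edges E x \<or> slack_blossoms E B y \<noteq> slack_blossoms E B x"
  shows "fractionality E B y < fractionality E B x"
proof -
  have "finite (fractional_edges E x)" "finite (slack_blossoms E B x)"
    using assms(1,2) by (simp_all add: fractional_edges_def slack_blossoms_def)
  then have "card (fractional_edges E y) \<le> card (fractional_edges E x)"
      "card (slack_blossoms E B y) \<le> card (slack_blossoms E B x)"
      "card (fractional_edges E y) < card (fractional_edges E x) \<or>
       card (slack_blossoms E B y) < card (slack_blossoms E B x)"
    using assms(3-5) by (auto intro: card_mono psubset_card_mono)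
  then show ?thesis unfolding fractionality_def by linarith
qed

lemma exists_cheaper_less_fractional:
  assumes "simple_graph V E" "B \<subseteq> V" "lp_feasible V E B x"
    and "balanced_direction V E x d" "d e1 \<noteq> 0"
  obtains x' where "lp_feasible V E B x'" "lp_cost E w x' \<le> lp_cost E w x"
    "fractionality E B x' < fractionality E B x"
proof -
  have "finite E" using assms(1) by (rule simple_graph_finite_edges)
  have "finite B" using assms(1,2) by (auto simp: simple_graph_def intro: finite_subset)
  obtain d' where d': "balanced_direction V E x d'" "d' e1 \<noteq> 0" "(\<Sum>e\<in>E. w e * d' e) \<le> 0"
  proof (cases "(\<Sum>e\<in>E. w e * d e) \<le> 0")
    case True
    then show ?thesis using that assms(4,5) by blast
  next
    case False
    then show ?thesis
      using that[of "\<lambda>e. - d e"] balanced_direction_uminus[OF assms(4)] assms(5)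
      by (simp add: sum_negf)
  qed
  obtain t where t: "0 < t"
    "\<And>e. e \<in> E \<Longrightarrow> 0 \<le> x e + t * d' e \<and> x e + t * d' e \<le> 1"
    "\<And>v. v \<in> slack_blossoms E B x \<Longrightarrow> 1 \<le> (\<Sum>e\<in>delta E v. x e + t * d' e)"
    and blocking: "(\<exists>e\<in>fractional_edges E x. x e + t * d' e \<in> {0, 1}) \<or>
      (\<exists>v\<in>slack_blossoms E B x. (\<Sum>e\<in>delta E v. x e + t * d' e) = 1)"
    using exists_blocking_step[OF \<open>finite E\<close> \<open>finite B\<close> assms(3) d'(1,2)] by blast
  define x' where "x' = (\<lambda>e. x e + t * d' e)"
  note step = feasible_step[OF assms(2,3) d'(1) t(2,3), folded x'_def]
  have "lp_cost E w x' \<le> lp_cost E w x"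
    using lp_cost_step[of E w x t d'] t(1) d'(3) by (simp add: x'_def mult_nonneg_nonpos)
  moreover have "fractional_edges E x' \<noteq> fractional_edges E x \<or>
      slack_blossoms E B x' \<noteq> slack_blossoms E B x"
    using blocking
  proof (elim disjE bexE)
    fix e assume "e \<in> fractional_edges E x" "x e + t * d' e \<in> {0, 1}"
    moreover from this have "e \<notin> fractional_edges E x'" by (auto simp: x'_def fractional_edges_def)
    ultimately show ?thesis by blast
  next
    fix v assume "v \<in> slack_blossoms E B x" "(\<Sum>e\<in>delta E v. x e + t * d' e) = 1"
    moreover from this have "v \<notin> slack_blossoms E B x'" by (simp add: x'_def slack_blossoms_def)
    ultimately show ?thesis by blast
  qed
  then have "fractionality E B x' < fractionality E B x"
    using fractionality_less[OF \<open>finite E\<close> \<open>finite B\<close> step(2,3)] by blast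
  ultimately show ?thesis using that step(1) by blast
qed

lemma exists_cheaper_rigid_solution:
  assumes "simple_graph V E" "B \<subseteq> V" "lp_feasible V E B x"
  shows "\<exists>y. lp_feasible V E B y \<and> lp_cost E w y \<le> lp_cost E w x \<and> rigid V E y"
  using assms(3)
proof (induction "fractionality E B x" arbitrary: x rule: less_induct)
  case less
  show ?case
  proof (cases "\<exists>d. balanced_direction V E x d \<and> d \<noteq> (\<lambda>_. 0)")
    case True
    then obtain d e1 where "balanced_direction V E x d" "d e1 \<noteq> 0" by fastforce
    then obtain x' where "lp_feasible V E B x'" "lp_cost E w x' \<le> lp_cost E w x"
        "fractionality E B x' < fractionality E B x"
      using exists_cheaper_less_fractional[OF assms(1,2) less.prems] by blast
    then show ?thesis using less.hyps[of x'] by fastforce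
  next
    case False
    then show ?thesis using less.prems by (auto simp: rigid_def)
  qed
qed

section \<open>Rigid feasible points\<close>

lemma sum_delta_eq_sum_incident:
  assumes "finite E" "F \<subseteq> E" "\<And>e. e \<notin> F \<Longrightarrow> d e = 0"
  shows "(\<Sum>e\<in>delta E v. d e) = (\<Sum>e\<in>{e \<in> F. v \<in> e}. d e)"
  using assms by (intro sum.mono_neutral_right) (auto simp: delta_def)

lemma tight_vertex_fractional_edges:
  assumes "finite E" "lp_feasible V E B x" "(\<Sum>e\<in>delta E v. x e) = 1"
    and "{e \<in> fractional_edges E x. v \<in> e} \<noteq> {}"
  shows "(\<Sum>e\<in>{e \<in> fractional_edges E x. v \<in> e}. x e) = 1"
    and "2 \<le> card {e \<in> fractional_edges E x. v \<in> e}"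
proof -
  let ?A = "{e \<in> fractional_edges E x. v \<in> e}" and ?D = "delta E v"
  have fin: "finite ?D" using assms(1) by (simp add: delta_def)
  have sub: "?A \<subseteq> ?D" by (auto simp: delta_def fractional_edges_def)
  have frac: "0 < x e \<and> x e < 1" if "e \<in> ?A" for e
    using that by (simp add: fractional_edges_def)
  \<comment> \<open>The integral edges at v contribute an integer, the fractional ones a positive amount.\<close>
  have "(\<Sum>e\<in>?D - ?A. x e) = (\<Sum>e\<in>?D - ?A. if x e = 1 then 1 else 0)"
  proof (rule sum.cong)
    fix e assume "e \<in> ?D - ?A"
    then have "e \<in> E" "\<not> (0 < x e \<and> x e < 1)" by (auto simp: delta_def fractional_edges_def)
    then show "x e = (if x e = 1 then 1 else 0)" using assms(2) by (auto simp: lp_feasible_def)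
  qed simp
  also have "\<dots> = real (card {e \<in> ?D - ?A. x e = 1})"
    using fin by (simp add: sum.inter_filter[symmetric])
  finally have total: "(\<Sum>e\<in>?A. x e) + real (card {e \<in> ?D - ?A. x e = 1}) = 1"
    using assms(3) sum.subset_diff[OF sub fin, of x] by simp
  moreover have "0 < (\<Sum>e\<in>?A. x e)"
    using assms(4) finite_subset[OF sub fin] frac by (intro sum_pos) auto
  then have "card {e \<in> ?D - ?A. x e = 1} = 0" using total by linarith
  then show sum_one: "(\<Sum>e\<in>?A. x e) = 1" using total by simp
  show "2 \<le> card ?A"
  proof (rule ccontr)
    assume "\<not> 2 \<le> card ?A"
    moreover have "card ?A \<noteq> 0"
      using assms(1,4) by (simp add: fractional_edges_def)
    ultimately have "card ?A = 1" by linarith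
    then obtain f where "?A = {f}" by (rule card_1_singletonE)
    then show False using sum_one frac[of f] by simp
  qed
qed

lemma rigid_solution_card_fractional_le:
  assumes "simple_graph V E"
    and rigid: "rigid V E x"
  shows "card (fractional_edges E x) \<le>
    card {v \<in> V. (\<exists>e\<in>fractional_edges E x. v \<in> e) \<and> (\<Sum>e\<in>delta E v. x e) = 1}"
    (is "card ?F \<le> card ?T")
proof (rule ccontr)
  assume "\<not> card ?F \<le> card ?T"
  moreover have "finite E" using assms(1) by (rule simple_graph_finite_edges)
  moreover have "finite V" using assms(1) by (simp add: simple_graph_def)
  moreover from \<open>finite E\<close> have "finite ?F" by (simp add: fractional_edges_def)
  ultimately obtain d :: "'a set \<Rightarrow> real" where d: "\<forall>e. e \<notin> ?F \<longrightarrow> d e = 0" "\<exists>e\<in>?F. d e \<noteq> 0"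
      "\<forall>v\<in>?T. (\<Sum>e\<in>?F. (if v \<in> e then 1 else 0) * d e) = 0"
    using homogeneous_system_nontrivial_solution[of ?T ?F "\<lambda>v e. if v \<in> e then 1 else 0"]
    by auto
  have "(\<Sum>e\<in>delta E v. d e) = 0" if "v \<in> V" "(\<Sum>e\<in>delta E v. x e) = 1" for v
  proof -
    have "(\<Sum>e\<in>delta E v. d e) = (\<Sum>e\<in>{e \<in> ?F. v \<in> e}. d e)"
      using \<open>finite E\<close> d(1) by (intro sum_delta_eq_sum_incident) (auto simp: fractional_edges_def)
    also have "\<dots> = (\<Sum>e\<in>?F. if v \<in> e then d e else 0)"
      using \<open>finite ?F\<close> by (simp add: sum.inter_filter)
    also have "\<dots> = (\<Sum>e\<in>?F. (if v \<in> e then 1 else 0) * d e)"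
      by (rule sum.cong) auto
    also have "\<dots> = 0"
      using d(3) that by (cases "\<exists>e\<in>?F. v \<in> e") auto
    finally show ?thesis .
  qed
  then have "balanced_direction V E x d"
    using d(1) by (simp add: balanced_direction_def)
  then have "d = (\<lambda>_. 0)" using rigid by (simp add: rigid_def)
  then show False using d(2) by simp
qed

lemma rigid_solution_fractional_degree:
  assumes sg: "simple_graph V E" and feas: "lp_feasible V E B x"
    and rigid: "rigid V E x"
    and v: "e \<in> fractional_edges E x" "v \<in> e"
  shows "(\<Sum>e\<in>delta E v. x e) = 1" "card {f \<in> fractional_edges E x. v \<in> f} = 2"
proof -
  let ?F = "fractional_edges E x"
  define W where "W = {v \<in> V. \<exists>e\<in>?F. v \<in> e}"
  define T where "T = {v \<in> W. (\<Sum>e\<in>delta E v. x e) = 1}"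
  define deg where "deg v = card {f \<in> ?F. v \<in> f}" for v
  have "finite E" using sg by (rule simple_graph_finite_edges)
  have "finite W" using sg by (simp add: W_def simple_graph_def)
  have "finite ?F" using \<open>finite E\<close> by (simp add: fractional_edges_def)
  have edge: "card e = 2 \<and> e \<subseteq> W" if "e \<in> ?F" for e
  proof -
    have "e \<in> E" using that by (simp add: fractional_edges_def)
    then obtain u w where "e = {u, w}" "u \<noteq> w" "u \<in> V" "w \<in> V"
      using sg by (auto simp: simple_graph_def)
    then show ?thesis using that by (auto simp: W_def)
  qed
  have "card ?F \<le> card T"
    using rigid_solution_card_fractional_le[OF sg rigid] by (simp add: T_def W_def conj_assoc)
  then have sum_le: "(\<Sum>v\<in>W. deg v) \<le> 2 * card T"
    using sum_card_incident_eq_twice_card[OF \<open>finite W\<close> edge] by (simp add: deg_def)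
  have ge1: "1 \<le> deg v" if "v \<in> W" for v
  proof -
    have "{f \<in> ?F. v \<in> f} \<noteq> {}" using that by (auto simp: W_def)
    then show ?thesis using \<open>finite ?F\<close> by (simp add: deg_def Suc_le_eq card_gt_0_iff)
  qed
  have ge2: "2 \<le> deg v" if "v \<in> T" for v
    using tight_vertex_fractional_edges(2)[OF \<open>finite E\<close> feas] that
    by (auto simp: T_def W_def deg_def)
  have "T \<subseteq> W" by (simp add: T_def)
  note forced = sum_le_twice_card_forces_two[OF \<open>finite W\<close> this ge1 ge2 sum_le]
  have "v \<in> W" using edge v by blast
  then have "v \<in> T" using forced(1) by simp
  then show "(\<Sum>e\<in>delta E v. x e) = 1" by (simp add: T_def)
  show "card {f \<in> ?F. v \<in> f} = 2" using forced(2) \<open>v \<in> W\<close> by (simp add: deg_def)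
qed

lemma rigid_solution_fractional_half:
  assumes sg: "simple_graph V E" and feas: "lp_feasible V E B x"
    and rigid: "rigid V E x"
    and "e \<in> fractional_edges E x"
  shows "x e = 1/2"
proof -
  let ?F = "fractional_edges E x"
  have "finite E" using sg by (rule simple_graph_finite_edges)
  define d where "d f = (if f \<in> ?F then x f - 1/2 else 0)" for f
  have "(\<Sum>f\<in>delta E v. d f) = 0" if "v \<in> V" "(\<Sum>f\<in>delta E v. x f) = 1" for v
  proof -
    have "(\<Sum>f\<in>delta E v. d f) = (\<Sum>f\<in>{f \<in> ?F. v \<in> f}. d f)"
      using \<open>finite E\<close> by (intro sum_delta_eq_sum_incident) (auto simp: d_def fractional_edges_def)
    also have "\<dots> = (\<Sum>f\<in>{f \<in> ?F. v \<in> f}. x f - 1/2)"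
      by (rule sum.cong) (simp_all add: d_def)
    also have "\<dots> = 0"
    proof (cases "{f \<in> ?F. v \<in> f} = {}")
      case True
      then show ?thesis by (simp only: sum.empty)
    next
      case False
      then obtain g where "g \<in> ?F" "v \<in> g" by blast
      then have "card {f \<in> ?F. v \<in> f} = 2"
        by (rule rigid_solution_fractional_degree(2)[OF sg feas rigid])
      moreover have "(\<Sum>f\<in>{f \<in> ?F. v \<in> f}. x f) = 1"
        using tight_vertex_fractional_edges(1)[OF \<open>finite E\<close> feas that(2) False] .
      ultimately show ?thesis by (simp add: sum_subtractf)
    qed
    finally show ?thesis .
  qed
  then have "balanced_direction V E x d"
    by (simp add: balanced_direction_def d_def)
  then have "d = (\<lambda>_. 0)" using rigid by (simp add: rigid_def)
  then have "d e = 0" by simp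
  then show ?thesis using assms(4) by (simp add: d_def)
qed

lemma rigid_solution_fractional_two_regular:
  assumes sg: "simple_graph V E" and feas: "lp_feasible V E B x"
    and rigid: "rigid V E x"
  shows "two_regular (fractional_edges E x)"
  unfolding two_regular_def
proof (intro conjI ballI)
  show "finite (fractional_edges E x)"
    using simple_graph_finite_edges[OF sg] by (simp add: fractional_edges_def)
  show "card e = 2" if "e \<in> fractional_edges E x" for e
    using sg that by (auto simp: simple_graph_def fractional_edges_def)
  show "card {f \<in> fractional_edges E x. v \<in> f} = 2" if "e \<in> fractional_edges E x" "v \<in> e" for e v
    using rigid_solution_fractional_degree(2)[OF sg feas rigid that] .
qed

lemma rigid_solution_fractional_cycle_odd:
  assumes sg: "simple_graph V E"
    and rigid: "rigid V E x"
    and c: "distinct c" "3 \<le> length c" "cycle_edges c \<subseteq> fractional_edges E x"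
  shows "odd (length c)"
proof
  assume "even (length c)"
  have "finite E" using sg by (rule simple_graph_finite_edges)
  have "cycle_edges c \<subseteq> E" using c(3) by (auto simp: fractional_edges_def)
  have "(\<Sum>e\<in>delta E v. alternating c e) = 0" for v
    using sum_delta_eq_sum_incident[OF \<open>finite E\<close> \<open>cycle_edges c \<subseteq> E\<close>, of "alternating c"]
      alternating_sum_at_vertex[OF c(1,2) \<open>even (length c)\<close>]
    by (simp add: alternating_def)
  then have "balanced_direction V E x (alternating c)"
    using c(3) by (auto simp: balanced_direction_def alternating_def)
  then have "alternating c = (\<lambda>_. 0)" using rigid by (simp add: rigid_def)
  then have "alternating c (cycle_edge c 0) = 0" by simp
  moreover have "0 < length c" using c(2) by linarith
  ultimately show False using alternating_cycle_edge[OF c(1,2)] by fastforce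
qed

lemma rigid_solution_half_integral:
  assumes sg: "simple_graph V E" and feas: "lp_feasible V E B x"
    and rigid: "rigid V E x"
  shows "\<forall>e\<in>E. x e \<in> {0, 1/2, 1}" and "vertex_disjoint_odd_cycles {e \<in> E. x e = 1/2}"
proof -
  have half: "{e \<in> E. x e = 1/2} = fractional_edges E x"
    using rigid_solution_fractional_half[OF sg feas rigid] by (auto simp: fractional_edges_def)
  show "\<forall>e\<in>E. x e \<in> {0, 1/2, 1}"
    using feas half by (force simp: lp_feasible_def fractional_edges_def)
  obtain Cs where Cs: "\<forall>c\<in>Cs. distinct c \<and> 3 \<le> length c"
      "\<forall>c\<in>Cs. \<forall>d\<in>Cs. c \<noteq> d \<longrightarrow> set c \<inter> set d = {}"
      "fractional_edges E x = \<Union> (cycle_edges ` Cs)"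
    using two_regular_cycle_decomposition[OF rigid_solution_fractional_two_regular[OF sg feas rigid]]
    by blast
  have "is_odd_cycle c" if "c \<in> Cs" for c
  proof -
    have "cycle_edges c \<subseteq> fractional_edges E x" using Cs(3) that by blast
    then show ?thesis
      using rigid_solution_fractional_cycle_odd[OF sg rigid] Cs(1) that
      by (auto simp: is_odd_cycle_def)
  qed
  then show "vertex_disjoint_odd_cycles {e \<in> E. x e = 1/2}"
    unfolding vertex_disjoint_odd_cycles_def half using Cs(2,3) by blast
qed

section \<open>Half-integral optimal solutions\<close>

lemma finite_lp_cost_values:
  assumes "finite E" "finite R"
  shows "finite ((\<lambda>y. lp_cost E w y) ` {y. \<forall>e\<in>E. y e \<in> R})"
proof -
  let ?restrict = "\<lambda>y e. if e \<in> E then y e else 0"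
  have "(\<lambda>y. lp_cost E w y) ` {y. \<forall>e\<in>E. y e \<in> R} \<subseteq>
      (\<lambda>y. lp_cost E w y) ` {f. \<forall>e. (e \<in> E \<longrightarrow> f e \<in> R) \<and> (e \<notin> E \<longrightarrow> f e = 0)}"
  proof (rule image_subsetI)
    fix y assume "y \<in> {y. \<forall>e\<in>E. y e \<in> R}"
    moreover have "lp_cost E w y = lp_cost E w (?restrict y)"
      by (simp add: lp_cost_def)
    ultimately show "lp_cost E w y \<in> (\<lambda>y. lp_cost E w y) `
        {f. \<forall>e. (e \<in> E \<longrightarrow> f e \<in> R) \<and> (e \<notin> E \<longrightarrow> f e = 0)}"
      by (intro image_eqI[of _ _ "?restrict y"]) auto
  qed
  then show ?thesis
    using finite_subset finite_imageI[OF finite_set_of_finite_funs[OF assms]] by blast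
qed

lemma exists_cheaper_half_integral_solution:
  assumes "simple_graph V E" "B \<subseteq> V" "lp_feasible V E B x"
  shows "\<exists>y. lp_feasible V E B y \<and> (\<forall>e\<in>E. y e \<in> {0, 1/2, 1}) \<and>
           vertex_disjoint_odd_cycles {e \<in> E. y e = 1/2} \<and> lp_cost E w y \<le> lp_cost E w x"
proof -
  obtain y where y: "lp_feasible V E B y" "lp_cost E w y \<le> lp_cost E w x" "rigid V E y"
    using exists_cheaper_rigid_solution[OF assms] by blast
  then show ?thesis using rigid_solution_half_integral[OF assms(1) y(1,3)] by blast
qed

lemma finite_image_attains_min:
  fixes f :: "'a \<Rightarrow> 'b::linorder"
  assumes "finite (f ` S)" "S \<noteq> {}"
  shows "\<exists>y\<in>S. \<forall>z\<in>S. f y \<le> f z"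
proof -
  obtain m where "m \<in> f ` S" "\<not> (\<exists>u\<in>f ` S. u < m)"
    using ex_min_if_finite[OF assms(1)] assms(2) by blast
  then show ?thesis by (auto simp: not_less)
qed

theorem theorem3:
  fixes V :: "'a set" and E :: "'a set set" and B :: "'a set"
    and w :: "'a set \<Rightarrow> real"
  assumes "simple_graph V E"
    and "B \<subseteq> V"
    and "\<exists>x. lp_feasible V E B x"
  shows "\<exists>xs. lp_optimal V E B w xs \<and>
           (\<forall>e\<in>E. xs e \<in> {0, 1/2, 1}) \<and>
           vertex_disjoint_odd_cycles {e \<in> E. xs e = 1/2}"
proof -
  define S where "S = {y. lp_feasible V E B y \<and> (\<forall>e\<in>E. y e \<in> {0, 1/2, 1}) \<and>
                          vertex_disjoint_odd_cycles {e \<in> E. y e = 1/2}}"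
  have dominated: "\<exists>y\<in>S. lp_cost E w y \<le> lp_cost E w z" if "lp_feasible V E B z" for z
    using exists_cheaper_half_integral_solution[OF assms(1,2) that, of w] by (auto simp: S_def)
  have "finite (lp_cost E w ` S)"
    using finite_lp_cost_values[OF simple_graph_finite_edges[OF assms(1)], of "{0, 1/2, 1}" w]
    by (rule finite_subset[rotated]) (auto simp: S_def)
  moreover have "S \<noteq> {}" using assms(3) dominated by blast
  ultimately obtain y where "y \<in> S" and min: "\<forall>z\<in>S. lp_cost E w y \<le> lp_cost E w z"
    using finite_image_attains_min by blast
  have "lp_cost E w y \<le> lp_cost E w z" if "lp_feasible V E B z" for z
    using dominated[OF that] min by (meson order_trans)
  then show ?thesis using \<open>y \<in> S\<close> by (auto simp: S_def lp_optimal_def)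
qed

end
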